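(* Let $x_0\in\mathbb{R}$, $r>0$, and let $F:(x_0-r,x_0+r)\to\mathbb{R}$ be of class $C^3$ with $F(x_0)=x_0$, $F'(x_0)=1$, $F''(x_0)<0$. Then there exists $r_1>0$ such that for every $x_1\in(x_0,x_0+r_1)$ the sequence defined by $x_{n+1}=F(x_n)$ satisfies $|x_n-x_0|\simeq n^{-1}$ as $n\to\infty$, the set $S(x_1)=\{x_n:n\ge1\}$ satisfies $\dim_BS(x_1)=\frac12$, and $S(x_1)$ is Minkowski nondegenerate. Analogously, if instead $F''(x_0)>0$, the same conclusions hold for every $x_1\in(x_0-r_1,x_0)$.
   Context: For sequences of positive reals, $a_n\simeq b_n$ as $n\to\infty$ means there exist constants $0<A\le B$ with $A\le a_n/b_n\le B$ for all $n$. For a bounded set $S\subset\mathbb{R}$ and $\varepsilon>0$, $S_\varepsilon=\{y: \mathrm{dist}(y,S)<\varepsilon\}$ and $|S_\varepsilon|$ is its Lebesgue measure. $\mathcal M^{*s}(S)=\limsup_{\varepsilon\to0}|S_\varepsilon|/\varepsilon^{1-s}$, $\mathcal M_*^{s}(S)=\liminf_{\varepsilon\to0}|S_\varepsilon|/\varepsilon^{1-s}$; $\overline{\dim}_BS=\inf\{s\ge0:\mathcal M^{*s}(S)=0\}$, $\underline{\dim}_BS=\inf\{s\ge0:\mathcal M_*^{s}(S)=0\}$, and $\dim_BS$ is their common value when equal. $S$ is Minkowski nondegenerate if there is $d\ge0$ with $0<\mathcal M_*^d(S)\le\mathcal M^{*d}(S)<\infty$. *)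

theory Defs
  imports "HOL-Analysis.Analysis"
begin

definition C_k_on :: "nat \<Rightarrow> real set \<Rightarrow> (real \<Rightarrow> real) \<Rightarrow> bool" where
  "C_k_on k S F \<longleftrightarrow>
     (\<forall>j<k. \<forall>x\<in>S. (((deriv ^^ j) F) has_real_derivative ((deriv ^^ Suc j) F x)) (at x))
     \<and> continuous_on S ((deriv ^^ k) F)"

definition comparable_seq :: "(nat \<Rightarrow> real) \<Rightarrow> (nat \<Rightarrow> real) \<Rightarrow> bool" where
  "comparable_seq a b \<longleftrightarrow>
     (\<exists>A B. 0 < A \<and> A \<le> B \<and> (\<forall>n\<ge>1. A \<le> a n / b n \<and> a n / b n \<le> B))"

definition eps_nbhd :: "real set \<Rightarrow> real \<Rightarrow> real set" where
  "eps_nbhd S e = {y. infdist y S < e}"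

definition upper_minkowski :: "real \<Rightarrow> real set \<Rightarrow> ereal" where
  "upper_minkowski s S =
     Limsup (at_right 0) (\<lambda>e. ereal (measure lebesgue (eps_nbhd S e) / e powr (1 - s)))"

definition lower_minkowski :: "real \<Rightarrow> real set \<Rightarrow> ereal" where
  "lower_minkowski s S =
     Liminf (at_right 0) (\<lambda>e. ereal (measure lebesgue (eps_nbhd S e) / e powr (1 - s)))"

definition upper_box_dim :: "real set \<Rightarrow> real" where
  "upper_box_dim S = Inf {s. s \<ge> 0 \<and> upper_minkowski s S = 0}"

definition lower_box_dim :: "real set \<Rightarrow> real" where
  "lower_box_dim S = Inf {s. s \<ge> 0 \<and> lower_minkowski s S = 0}"

definition box_dim_eq :: "real set \<Rightarrow> real \<Rightarrow> bool" where
  "box_dim_eq S d \<longleftrightarrow> upper_box_dim S = d \<and> lower_box_dim S = d"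

definition minkowski_nondegenerate :: "real set \<Rightarrow> bool" where
  "minkowski_nondegenerate S \<longleftrightarrow>
     (\<exists>d\<ge>0. 0 < lower_minkowski d S \<and> lower_minkowski d S \<le> upper_minkowski d S
            \<and> upper_minkowski d S < \<infinity>)"

end

theory Submission
  imports Defs
begin

(* Let F(x0) = x0, F'(x0) = 1 and F''(x0) \<noteq> 0.  On the side
   where the orbit is attracted, the normalised displacement y_n = |x_n - x0| obeys
   y_(n+1) = y_n - \<Theta>(y_n^2) by Taylor's theorem.  For such a recursion 1/y_n grows linearly,
   so y_n \<simeq> 1/n and the gaps y_n - y_(n+1) are O(1/n^2).  Counting the e-neighbourhood of
   the orbit -- a single interval for the tail n \<ge> e^(-1/2) and separate intervals of length 2e
   for the earlier points -- gives |S_e| \<simeq> sqrt e, which forces dim_B S = 1/2 and Minkowski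
   nondegeneracy. *)

lemma infdist_less_witness:
  fixes S :: "'a::metric_space set"
  assumes "infdist z S < e" "S \<noteq> {}"
  shows "\<exists>s\<in>S. dist z s < e"
proof -
  have "(INF a\<in>S. dist z a) < e" using assms by (simp add: infdist_notempty)
  then show ?thesis using cInf_lessD[of "(\<lambda>a. dist z a) ` S" e] assms(2) by auto
qed

lemma eps_nbhd_sets: "eps_nbhd S e \<in> sets lebesgue"
proof -
  have "open (eps_nbhd S e)" unfolding eps_nbhd_def by (intro open_Collect_less continuous_intros)
  then show ?thesis by (simp add: borel_open)
qed

lemma eps_nbhd_lmeasurable:
  assumes "bounded S" "S \<noteq> {}"
  shows "eps_nbhd S e \<in> lmeasurable"
proof -
  obtain R where R: "\<And>s. s \<in> S \<Longrightarrow> \<bar>s\<bar> \<le> R" using assms(1) by (auto simp: bounded_iff)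
  have "eps_nbhd S e \<subseteq> cball 0 (R + e)"
  proof
    fix z assume "z \<in> eps_nbhd S e"
    then obtain s where "s \<in> S" "dist z s < e"
      using infdist_less_witness[of z S e] assms(2) by (auto simp: eps_nbhd_def)
    then show "z \<in> cball 0 (R + e)" using R[of s] by (auto simp: dist_real_def)
  qed
  then have "bounded (eps_nbhd S e)" using bounded_cball bounded_subset by blast
  then show ?thesis using eps_nbhd_sets by (intro bounded_set_imp_lmeasurable) auto
qed

(* The reflection t \<mapsto> c - t is an isometry preserving Lebesgue measure, so it does not
   change the measure of neighbourhoods.  This reduces the left-sided case to the right-sided one. *)
lemma eps_nbhd_reflect:
  "measure lebesgue (eps_nbhd ((\<lambda>t. c - t) ` S) e) = measure lebesgue (eps_nbhd S e)"
proof -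
  define f where "f t = (-1) *\<^sub>R t + c" for t :: real
  have ff: "f (f t) = t" for t by (simp add: f_def)
  have dist_f: "dist (f a) (f b) = dist a b" for a b by (simp add: f_def dist_real_def abs_minus_commute)
  have inf: "infdist (f z) (f ` S) = infdist z S" for z
    unfolding infdist_def by (simp add: image_image dist_f)
  have "eps_nbhd (f ` S) e = f ` eps_nbhd S e"
  proof (intro set_eqI iffI)
    fix z assume "z \<in> eps_nbhd (f ` S) e"
    then have "f z \<in> eps_nbhd S e" using ff inf[of "f z"] by (simp add: eps_nbhd_def)
    then show "z \<in> f ` eps_nbhd S e" using ff by (metis image_eqI)
  qed (auto simp: eps_nbhd_def inf)
  moreover have "f = (\<lambda>t. c - t)" by (auto simp: f_def)
  ultimately show ?thesis
    using measure_lebesgue_affine[of "-1" c "eps_nbhd S e"] by (simp add: f_def)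
qed

lemma minkowski_reflect:
  "upper_minkowski d ((\<lambda>t. c - t) ` S) = upper_minkowski d S"
  "lower_minkowski d ((\<lambda>t. c - t) ` S) = lower_minkowski d S"
  unfolding upper_minkowski_def lower_minkowski_def eps_nbhd_reflect by simp_all

lemma reflect_dimension:
  "box_dim_eq ((\<lambda>t. c - t) ` S) d = box_dim_eq S d"
  "minkowski_nondegenerate ((\<lambda>t. c - t) ` S) = minkowski_nondegenerate S"
  unfolding box_dim_eq_def upper_box_dim_def lower_box_dim_def minkowski_nondegenerate_def
    minkowski_reflect by simp_all

lemma unit_scaling_dimension:
  assumes s: "\<bar>s\<bar> = 1" and "box_dim_eq S d" "minkowski_nondegenerate S"
  shows "box_dim_eq ((\<lambda>t. x0 + s * (t - x0)) ` S) d
         \<and> minkowski_nondegenerate ((\<lambda>t. x0 + s * (t - x0)) ` S)"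
proof (cases "s = 1")
  case False
  then have "s = -1" using s by linarith
  then have reflection: "(\<lambda>t. x0 + s * (t - x0)) = (\<lambda>t. 2 * x0 - t)" by auto
  show ?thesis unfolding reflection reflect_dimension using assms by simp
qed (use assms in simp)

lemma ratio_powr_sqrt:
  fixes e m s :: real
  assumes "e > 0"
  shows "m / e powr (1 - s) = (m / sqrt e) * e powr (s - 1/2)"
proof -
  have "e powr (s - 1/2) * e powr (1 - s) = sqrt e"
    using assms by (simp add: powr_add[symmetric] powr_half_sqrt)
  with assms show ?thesis by (simp add: field_simps)
qed

lemma minkowski_contents_vanish:
  assumes bound: "eventually (\<lambda>e. measure lebesgue (eps_nbhd S e) \<le> C * sqrt e) (at_right 0)"
    and s: "s > 1/2"
  shows "upper_minkowski s S = 0 \<and> lower_minkowski s S = 0"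
proof -
  define m where "m e = measure lebesgue (eps_nbhd S e)" for e
  have pos: "eventually (\<lambda>e::real. 0 < e) (at_right 0)" by (simp add: eventually_at_right_less)
  have "((\<lambda>e. e powr (s - 1/2)) \<longlongrightarrow> 0) (at_right 0)"
    using s pos by (intro tendsto_zero_powrI[where b="s - 1/2"] tendsto_ident_at tendsto_const)
      (auto elim: eventually_mono)
  then have to0: "((\<lambda>e. C * e powr (s - 1/2)) \<longlongrightarrow> 0) (at_right 0)"
    using tendsto_mult_right_zero by blast
  have "((\<lambda>e. m e / e powr (1 - s)) \<longlongrightarrow> 0) (at_right 0)"
  proof (rule tendsto_sandwich[OF _ _ tendsto_const to0])
    show "eventually (\<lambda>e. 0 \<le> m e / e powr (1 - s)) (at_right 0)"
      by (simp add: m_def)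
    show "eventually (\<lambda>e. m e / e powr (1 - s) \<le> C * e powr (s - 1/2)) (at_right 0)"
      using bound pos
    proof eventually_elim
      case (elim e)
      then have "m e / sqrt e \<le> C" by (simp add: m_def field_simps)
      then have "(m e / sqrt e) * e powr (s - 1/2) \<le> C * e powr (s - 1/2)"
        by (intro mult_right_mono) auto
      then show ?case using ratio_powr_sqrt[OF elim(2)] by simp
    qed
  qed
  then have "((\<lambda>e. ereal (m e / e powr (1 - s))) \<longlongrightarrow> 0) (at_right 0)"
    unfolding zero_ereal_def by (rule tendsto_ereal)
  then show ?thesis
    unfolding upper_minkowski_def lower_minkowski_def m_def[symmetric]
    using lim_imp_Limsup lim_imp_Liminf by force
qed

lemma lower_minkowski_lower_bound:
  assumes bound: "eventually (\<lambda>e. C * sqrt e \<le> measure lebesgue (eps_nbhd S e)) (at_right 0)"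
    and s: "s \<le> 1/2"
  shows "ereal C \<le> lower_minkowski s S"
proof -
  define m where "m e = measure lebesgue (eps_nbhd S e)" for e
  have small: "eventually (\<lambda>e::real. 0 < e \<and> e < 1) (at_right 0)"
    unfolding eventually_at_right_field by (intro exI[of _ 1]) auto
  have "eventually (\<lambda>e. ereal C \<le> ereal (m e / e powr (1 - s))) (at_right 0)"
    using bound small
  proof eventually_elim
    case (elim e)
    have "1 \<le> e powr (s - 1/2)"
      using elim s powr_mono2'[of "s - 1/2" e 1] by simp
    moreover have "C \<le> m e / sqrt e" using elim by (simp add: m_def field_simps)
    moreover have "0 \<le> m e / sqrt e" using elim by (simp add: m_def)
    ultimately have "C \<le> (m e / sqrt e) * e powr (s - 1/2)"
      by (metis mult.right_neutral mult_left_mono order_trans)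
    then show ?case using ratio_powr_sqrt[of e "m e" s] elim by simp
  qed
  then show ?thesis unfolding lower_minkowski_def m_def[symmetric] by (rule Liminf_bounded)
qed

lemma upper_minkowski_half_bound:
  assumes bound: "eventually (\<lambda>e. measure lebesgue (eps_nbhd S e) \<le> C * sqrt e) (at_right 0)"
  shows "upper_minkowski (1/2) S \<le> ereal C"
proof -
  have "eventually (\<lambda>e. ereal (measure lebesgue (eps_nbhd S e) / e powr (1 - 1/2)) \<le> ereal C)
          (at_right 0)"
    using bound eventually_at_right_less[of 0]
    by eventually_elim (simp add: powr_half_sqrt field_simps)
  then show ?thesis unfolding upper_minkowski_def by (rule Limsup_bounded)
qed

lemma sqrt_content_dimension:
  assumes C1: "C1 > 0"
    and bound: "eventually (\<lambda>e. C1 * sqrt e \<le> measure lebesgue (eps_nbhd S e)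
                              \<and> measure lebesgue (eps_nbhd S e) \<le> C2 * sqrt e) (at_right 0)"
  shows "box_dim_eq S (1/2) \<and> minkowski_nondegenerate S"
proof -
  have lo: "eventually (\<lambda>e. C1 * sqrt e \<le> measure lebesgue (eps_nbhd S e)) (at_right 0)"
    and hi: "eventually (\<lambda>e. measure lebesgue (eps_nbhd S e) \<le> C2 * sqrt e) (at_right 0)"
    using bound by (auto elim: eventually_mono)
  have pos: "0 < lower_minkowski s S \<and> lower_minkowski s S \<le> upper_minkowski s S"
    if "s \<le> 1/2" for s
  proof
    have "(0::ereal) < ereal C1" using C1 by simp
    also have "\<dots> \<le> lower_minkowski s S" by (rule lower_minkowski_lower_bound[OF lo that])
    finally show "0 < lower_minkowski s S" .
    show "lower_minkowski s S \<le> upper_minkowski s S"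
      unfolding lower_minkowski_def upper_minkowski_def by (simp add: Liminf_le_Limsup)
  qed
  have zero_set: "{s. s \<ge> 0 \<and> M s S = 0} = {1/2<..}"
    if "M = upper_minkowski \<or> M = lower_minkowski" for M
    using that pos minkowski_contents_vanish[OF hi] by (fastforce simp: not_le[symmetric])
  have "box_dim_eq S (1/2)"
    unfolding box_dim_eq_def upper_box_dim_def lower_box_dim_def
    using zero_set[of upper_minkowski] zero_set[of lower_minkowski] by simp
  moreover have "upper_minkowski (1/2) S < \<infinity>"
    using upper_minkowski_half_bound[OF hi] by (rule le_less_trans) simp
  ultimately show ?thesis
    unfolding minkowski_nondegenerate_def using pos[of "1/2"]
    by (intro conjI exI[of _ "1/2"]) auto
qed

(* Upper bound for a decreasing sequence with y_n \<le> B/n: the points with n \<ge> N \<approx> e^(-1/2)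
   lie in an interval of length about y_N \<le> B sqrt e, and the N earlier points contribute
   intervals of total length 2eN \<approx> 2 sqrt e. *)
lemma nbhd_measure_upper:
  fixes y :: "nat \<Rightarrow> real"
  assumes pos: "\<And>n. n \<ge> 1 \<Longrightarrow> 0 < y n"
    and mono: "\<And>n. n \<ge> 1 \<Longrightarrow> y (Suc n) \<le> y n"
    and hi: "\<And>n. n \<ge> 1 \<Longrightarrow> y n \<le> B / real n"
    and e: "0 < e" "e < 1"
  shows "measure lebesgue (eps_nbhd {x0 + y n |n. n \<ge> 1} e) \<le> (B + 4) * sqrt e"
proof -
  define S where "S = {x0 + y n |n. n \<ge> 1}"
  have antitone: "y m \<le> y n" if "1 \<le> n" "n \<le> m" for n m
    using that(2,1)
  proof (induction m rule: dec_induct)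
    case (step k)
    then show ?case using mono[of k] by simp
  qed simp
  have se: "0 < sqrt e" "e \<le> sqrt e" using e by (auto simp: real_le_rsqrt power2_eq_square)
  define N where "N = nat \<lceil>1 / sqrt e\<rceil>"
  have "0 < 1 / sqrt e" using se(1) by simp
  then have "0 \<le> \<lceil>1 / sqrt e\<rceil>" by linarith
  then have "real N = of_int \<lceil>1 / sqrt e\<rceil>" by (simp add: N_def)
  then have N: "1 / sqrt e \<le> real N" "real N \<le> 1 / sqrt e + 1"
    using of_int_ceiling_le_add_one[of "1 / sqrt e"] by linarith+
  have N1: "N \<ge> 1" using N(1) se(1) by (cases N) auto
  have "0 < B / real N" using pos[OF N1] hi[OF N1] by linarith
  then have B0: "0 \<le> B" using N1 by (simp add: zero_less_divide_iff)
  have "1 / real N \<le> sqrt e" using N(1) N1 se(1) by (simp add: field_simps)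
  then have "B * (1 / real N) \<le> B * sqrt e" using B0 by (rule mult_left_mono)
  then have yN: "y N \<le> B * sqrt e" using hi[OF N1] by simp
  define U where "U = {x0 - e .. x0 + y N + e} \<union> (\<Union>n\<in>{1..<N}. {x0 + y n - e .. x0 + y n + e})"
  have EU: "eps_nbhd S e \<subseteq> U"
  proof
    fix z assume "z \<in> eps_nbhd S e"
    then obtain s where "s \<in> S" "dist z s < e"
      using infdist_less_witness[of z S e] by (auto simp: eps_nbhd_def S_def)
    then obtain n where n: "n \<ge> 1" "\<bar>z - (x0 + y n)\<bar> < e"
      unfolding S_def dist_real_def by blast
    show "z \<in> U"
    proof (cases "n < N")
      case True
      then have "z \<in> {x0 + y n - e .. x0 + y n + e}" "n \<in> {1..<N}" using n by auto
      then show ?thesis unfolding U_def by blast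
    next
      case False
      then have "y n \<le> y N" using antitone[OF N1] by simp
      then have "z \<in> {x0 - e .. x0 + y N + e}" using n pos[of n] by auto
      then show ?thesis unfolding U_def by blast
    qed
  qed
  have "measure lebesgue (eps_nbhd S e) \<le> measure lebesgue U"
    using EU eps_nbhd_sets unfolding U_def by (intro measure_mono_fmeasurable) auto
  also have "\<dots> \<le> measure lebesgue {x0 - e .. x0 + y N + e}
                 + (\<Sum>n\<in>{1..<N}. measure lebesgue {x0 + y n - e .. x0 + y n + e})"
    unfolding U_def by (intro order_trans[OF measure_Un_le] add_mono measure_UNION_le) auto
  also have "\<dots> = y N + 2 * e * real N"
    using pos[OF N1] e N1 by (simp add: of_nat_diff algebra_simps)
  also have "\<dots> \<le> B * sqrt e + 4 * sqrt e"
  proof -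
    have "2 * e * real N \<le> 2 * e * (1 / sqrt e + 1)" using N(2) e by (intro mult_left_mono) auto
    also have "\<dots> = 2 * sqrt e + 2 * e" using se e by (simp add: field_simps real_sqrt_mult_self)
    finally show ?thesis using yN se by linarith
  qed
  finally show ?thesis by (simp add: S_def algebra_simps)
qed

lemma gaps_cover_interval:
  fixes y :: "nat \<Rightarrow> real"
  assumes M: "M \<ge> 1" and pos: "0 < y M"
    and gap: "\<And>k. k \<ge> M \<Longrightarrow> y k - y (Suc k) < e"
    and lim: "y \<longlonglongrightarrow> 0"
  shows "{x0 <.. x0 + y M} \<subseteq> eps_nbhd {x0 + y n |n. n \<ge> 1} e"
proof
  fix z assume z: "z \<in> {x0 <.. x0 + y M}"
  define w where "w = z - x0"
  have w: "0 < w" "w \<le> y M" using z by (auto simp: w_def)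
  obtain N where N: "\<And>n. n \<ge> N \<Longrightarrow> \<bar>y n\<bar> < w"
    using lim w(1) unfolding lim_sequentially by (auto simp: dist_real_def)
  have "\<bar>y (Suc (max M N))\<bar> < w" by (rule N) simp
  then have "y (Suc (max M N)) < w" by linarith
  then have ex: "\<exists>n. M \<le> n \<and> y (Suc n) < w" by (intro exI[of _ "max M N"]) simp
  define k where "k = (LEAST n. M \<le> n \<and> y (Suc n) < w)"
  have k: "M \<le> k" "y (Suc k) < w" using LeastI_ex[OF ex] by (auto simp: k_def)
  have yk: "w \<le> y k"
  proof (cases "k = M")
    case False
    then obtain j where j: "k = Suc j" "M \<le> j" using k(1) by (cases k) auto
    then have "\<not> (M \<le> j \<and> y (Suc j) < w)" unfolding k_def by (intro not_less_Least) simp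
    then show ?thesis using j by simp
  qed (use w in simp)
  have "x0 + y k \<in> {x0 + y n |n. n \<ge> 1}" using k(1) M by auto
  then have "infdist z {x0 + y n |n. n \<ge> 1} \<le> dist z (x0 + y k)" by (rule infdist_le)
  also have "\<dots> < e" using yk k gap[of k] by (simp add: dist_real_def w_def)
  finally show "z \<in> eps_nbhd {x0 + y n |n. n \<ge> 1} e" by (simp add: eps_nbhd_def)
qed

(* Lower bound: gaps of size D/n^2 fall below e from M \<approx> sqrt (D/e) on, so the
   neighbourhood contains an interval of length y_M \<ge> A/M \<approx> sqrt e. *)
lemma nbhd_measure_lower:
  fixes y :: "nat \<Rightarrow> real"
  assumes A: "A > 0" and D: "D > 0"
    and lo: "\<And>n. n \<ge> 1 \<Longrightarrow> A / real n \<le> y n"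
    and gap: "\<And>n. n \<ge> 1 \<Longrightarrow> y n - y (Suc n) \<le> D / (real n)\<^sup>2"
    and lim: "y \<longlonglongrightarrow> 0"
    and meas: "eps_nbhd {x0 + y n |n. n \<ge> 1} e \<in> lmeasurable"
    and e: "0 < e" "e < D"
  shows "A / (3 * sqrt D) * sqrt e \<le> measure lebesgue (eps_nbhd {x0 + y n |n. n \<ge> 1} e)"
proof -
  define q where "q = sqrt (D / e)"
  have q1: "q \<ge> 1" unfolding q_def using e by (simp add: real_le_rsqrt)
  define M where "M = nat \<lceil>q\<rceil> + 1"
  have "real M = of_int \<lceil>q\<rceil> + 1" unfolding M_def using q1 by simp
  then have M: "q < real M" "real M \<le> q + 2" "M \<ge> 1"
    using of_int_ceiling_le_add_one[of q] le_of_int_ceiling[of q] by (linarith, linarith, simp add: M_def)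
  have yM: "A / real M \<le> y M" using lo M(3) by simp
  have "0 < A / real M" using A M(3) by simp
  then have yM_pos: "0 < y M" using yM by linarith
  have gapM: "y k - y (Suc k) < e" if "k \<ge> M" for k
  proof -
    have "D = e * q\<^sup>2" using e D by (simp add: q_def)
    also have "\<dots> < e * (real M)\<^sup>2"
      using M(1) q1 e by (intro mult_strict_left_mono power_strict_mono) auto
    also have "\<dots> \<le> e * (real k)\<^sup>2" using that e by (intro mult_left_mono power_mono) auto
    finally have "D / (real k)\<^sup>2 < e" using M(3) that by (simp add: field_simps)
    then show ?thesis using gap[of k] M(3) that by simp
  qed
  have "A / (3 * sqrt D) * sqrt e \<le> A / real M"
  proof -
    have "real M * sqrt e \<le> 3 * q * sqrt e" using M q1 e by (intro mult_right_mono) auto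
    also have "\<dots> = 3 * sqrt D" using e by (simp add: q_def real_sqrt_divide)
    finally show ?thesis using A D e M(3) by (simp add: field_simps)
  qed
  also have "\<dots> \<le> y M" by (rule yM)
  also have "\<dots> = measure lebesgue {x0 <.. x0 + y M}"
    using yM_pos by simp
  also have "\<dots> \<le> measure lebesgue (eps_nbhd {x0 + y n |n. n \<ge> 1} e)"
  proof (rule measure_mono_fmeasurable[OF _ _ meas])
    show "{x0 <.. x0 + y M} \<subseteq> eps_nbhd {x0 + y n |n. n \<ge> 1} e"
      using M(3) yM_pos gapM lim by (rule gaps_cover_interval)
  qed simp
  finally show ?thesis .
qed

lemma harmonic_orbit_sqrt_content:
  fixes y :: "nat \<Rightarrow> real"
  assumes A: "A > 0" and D: "D > 0"
    and mono: "\<And>n. n \<ge> 1 \<Longrightarrow> y (Suc n) \<le> y n"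
    and bounds: "\<And>n. n \<ge> 1 \<Longrightarrow> A / real n \<le> y n \<and> y n \<le> B / real n"
    and gap: "\<And>n. n \<ge> 1 \<Longrightarrow> y n - y (Suc n) \<le> D / (real n)\<^sup>2"
  shows "eventually (\<lambda>e. A / (3 * sqrt D) * sqrt e \<le> measure lebesgue (eps_nbhd {x0 + y n |n. n \<ge> 1} e)
           \<and> measure lebesgue (eps_nbhd {x0 + y n |n. n \<ge> 1} e) \<le> (B + 4) * sqrt e) (at_right 0)"
proof -
  have pos: "0 < y n" if "n \<ge> 1" for n
  proof -
    have "0 < A / real n" using A that by simp
    then show ?thesis using bounds[OF that] by linarith
  qed
  have B: "0 \<le> B" using pos[of 1] bounds[of 1] by simp
  have lim: "y \<longlonglongrightarrow> 0"
  proof (rule tendsto_sandwich[OF _ _ tendsto_const lim_const_over_n[of B]])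
    show "eventually (\<lambda>n. 0 \<le> y n) sequentially"
      using eventually_ge_at_top[of 1] by eventually_elim (use pos in \<open>simp add: less_imp_le\<close>)
    show "eventually (\<lambda>n. y n \<le> B / real n) sequentially"
      using eventually_ge_at_top[of 1] by eventually_elim (use bounds in simp)
  qed
  have meas: "eps_nbhd {x0 + y n |n. n \<ge> 1} e \<in> lmeasurable" for e
  proof (rule eps_nbhd_lmeasurable)
    have "y n \<le> B" if "n \<ge> 1" for n
    proof -
      have "B / real n \<le> B / 1" using B that by (intro divide_left_mono) auto
      then show ?thesis using bounds[OF that] by simp
    qed
    then have "{x0 + y n |n. n \<ge> 1} \<subseteq> cball x0 B"
      using pos by (auto simp: dist_real_def less_imp_le)
    then show "bounded {x0 + y n |n. n \<ge> 1}" by (rule bounded_subset[OF bounded_cball])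
  qed auto
  have lower: "\<And>n. n \<ge> 1 \<Longrightarrow> A / real n \<le> y n" and upper: "\<And>n. n \<ge> 1 \<Longrightarrow> y n \<le> B / real n"
    using bounds by auto
  have "eventually (\<lambda>e. 0 < e \<and> e < min 1 D) (at_right 0)"
    unfolding eventually_at_right_field using D by (intro exI[of _ "min 1 D"]) auto
  then show ?thesis
  proof eventually_elim
    case (elim e)
    show ?case
      using nbhd_measure_lower[OF A D lower gap lim meas] nbhd_measure_upper[OF pos mono upper] elim
      by simp
  qed
qed

lemma reciprocal_step:
  fixes y y' c1 c2 :: real
  assumes y: "0 < y" and c1: "0 \<le> c1"
    and lo: "c1 * y\<^sup>2 \<le> y - y'" and hi: "y - y' \<le> c2 * y\<^sup>2" and small: "c2 * y \<le> 1/2"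
  shows "y / 2 \<le> y' \<and> c1 \<le> 1 / y' - 1 / y \<and> 1 / y' - 1 / y \<le> 2 * c2"
proof -
  have "c2 * y\<^sup>2 \<le> 1/2 * y" using small y by (simp add: power2_eq_square mult_right_mono)
  then have half: "y / 2 \<le> y'" using hi by simp
  then have y': "0 < y'" using y by simp
  have "0 \<le> c1 * y\<^sup>2" using c1 by simp
  then have le: "y' \<le> y" and c2: "0 \<le> c2 * y\<^sup>2" using lo hi by linarith+
  have eq: "1 / y' - 1 / y = (y - y') / (y * y')" using y y' by (simp add: field_simps)
  have "c1 = c1 * y\<^sup>2 / (y * y)" using y by (simp add: power2_eq_square)
  also have "\<dots> \<le> (y - y') / (y * y)" using lo y by (intro divide_right_mono) auto
  also have "\<dots> \<le> (y - y') / (y * y')"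
    using y y' le lo c1 by (intro divide_left_mono mult_left_mono) auto
  finally have lower: "c1 \<le> 1 / y' - 1 / y" using eq by simp
  have "(y - y') / (y * y') \<le> c2 * y\<^sup>2 / (y * (y / 2))"
    using hi y y' half c2 by (intro frac_le mult_left_mono) auto
  also have "\<dots> = 2 * c2" using y by (simp add: power2_eq_square)
  finally have upper: "1 / y' - 1 / y \<le> 2 * c2" using eq by simp
  show ?thesis using half lower upper by simp
qed

lemma reciprocal_linear_growth:
  fixes y :: "nat \<Rightarrow> real"
  assumes c1: "c1 > 0" and y1: "0 < y 1"
    and rec: "\<And>n. n \<ge> 1 \<Longrightarrow> c1 * (y n)\<^sup>2 \<le> y n - y (Suc n) \<and> y n - y (Suc n) \<le> c2 * (y n)\<^sup>2"
    and small: "\<And>n. n \<ge> 1 \<Longrightarrow> c2 * y n \<le> 1/2"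
  shows "\<exists>A B. 0 < A \<and> A \<le> B \<and> (\<forall>n\<ge>1. A / real n \<le> y n \<and> y n \<le> B / real n)"
proof -
  define u where "u n = 1 / y n" for n
  have step: "0 < y n \<longrightarrow> 0 < y (Suc n) \<and> c1 \<le> u (Suc n) - u n \<and> u (Suc n) - u n \<le> 2 * c2"
    if "n \<ge> 1" for n
    using reciprocal_step[of "y n" c1 "y (Suc n)" c2] rec[OF that] small[OF that] c1
    by (auto simp: u_def)
  have pos: "0 < y n" if "n \<ge> 1" for n
    using that by (induction n rule: dec_induct) (use y1 step in auto)
  have c2: "c1 \<le> 2 * c2" using step[of 1] pos[of 1] by simp
  have u1: "u 1 > 0" using y1 by (simp add: u_def)
  have growth: "u 1 + c1 * real m \<le> u (Suc m) \<and> u (Suc m) \<le> u 1 + 2 * c2 * real m" for m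
  proof (induction m)
    case (Suc m)
    then show ?case using step[of "Suc m"] pos[of "Suc m"] by (simp add: algebra_simps)
  qed simp
  define A where "A = 1 / (u 1 + 2 * c2)"
  define B where "B = 1 / min c1 (u 1)"
  have "A / real n \<le> y n \<and> y n \<le> B / real n" if n: "n \<ge> 1" for n
  proof -
    obtain m where m: "n = Suc m" using n by (cases n) auto
    have un: "y n = 1 / u n" "u n > 0" using pos[OF n] by (auto simp: u_def)
    have "u n \<le> u 1 + 2 * c2 * real m" using growth[of m] m by simp
    also have "\<dots> \<le> (u 1 + 2 * c2) * real n" using u1 c1 c2 m by (simp add: algebra_simps)
    finally have up: "u n \<le> (u 1 + 2 * c2) * real n" .
    have "min c1 (u 1) * real n = min c1 (u 1) + min c1 (u 1) * real m"
      using m by (simp add: algebra_simps)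
    also have "\<dots> \<le> u 1 + c1 * real m" by (intro add_mono mult_right_mono) auto
    also have "\<dots> \<le> u n" using growth[of m] m by simp
    finally have low: "min c1 (u 1) * real n \<le> u n" .
    have "A / real n = 1 / ((u 1 + 2 * c2) * real n)" unfolding A_def by simp
    also have "\<dots> \<le> y n" using up un by (simp add: frac_le)
    moreover have "y n \<le> 1 / (min c1 (u 1) * real n)"
      using low un c1 u1 n by (simp add: frac_le)
    ultimately show ?thesis by (simp add: B_def)
  qed
  moreover have "0 < A" "A \<le> B" using u1 c1 c2 unfolding A_def B_def
    by (auto intro!: divide_left_mono)
  ultimately show ?thesis by blast
qed

lemma comparable_seq_reciprocal:
  assumes "0 < A" "A \<le> B" "\<And>n. n \<ge> 1 \<Longrightarrow> A / real n \<le> a n \<and> a n \<le> B / real n"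
  shows "comparable_seq a (\<lambda>n. 1 / real n)"
  unfolding comparable_seq_def
proof (intro exI conjI allI impI)
  fix n :: nat assume n: "n \<ge> 1"
  then have "A \<le> real n * a n" "real n * a n \<le> B" using assms(3)[OF n] by (auto simp: field_simps)
  then show "A \<le> a n / (1 / real n)" "a n / (1 / real n) \<le> B" by (simp_all add: mult.commute)
qed (use assms in auto)

lemma quadratic_decay_orbit:
  fixes y :: "nat \<Rightarrow> real"
  assumes c1: "c1 > 0" and y1: "0 < y 1"
    and rec: "\<And>n. n \<ge> 1 \<Longrightarrow> c1 * (y n)\<^sup>2 \<le> y n - y (Suc n) \<and> y n - y (Suc n) \<le> c2 * (y n)\<^sup>2"
    and small: "\<And>n. n \<ge> 1 \<Longrightarrow> c2 * y n \<le> 1/2"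
  shows "(\<exists>A B. 0 < A \<and> A \<le> B \<and> (\<forall>n\<ge>1. A / real n \<le> y n \<and> y n \<le> B / real n))
         \<and> box_dim_eq {x0 + y n |n. n \<ge> 1} (1/2) \<and> minkowski_nondegenerate {x0 + y n |n. n \<ge> 1}"
proof -
  obtain A B where AB: "0 < A" "A \<le> B" "\<And>n. n \<ge> 1 \<Longrightarrow> A / real n \<le> y n \<and> y n \<le> B / real n"
    using reciprocal_linear_growth[OF c1 y1 rec small] by blast
  have mono: "y (Suc n) \<le> y n" if "n \<ge> 1" for n
  proof -
    have "0 \<le> c1 * (y n)\<^sup>2" using c1 by simp
    then show ?thesis using rec[OF that] by linarith
  qed
  have "c1 * (y 1)\<^sup>2 \<le> c2 * (y 1)\<^sup>2" using rec[of 1] by simp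
  then have "c1 \<le> c2" using y1 by simp
  define D where "D = c2 * B\<^sup>2"
  have D: "D > 0" using AB c1 \<open>c1 \<le> c2\<close> by (simp add: D_def)
  have gap: "y n - y (Suc n) \<le> D / (real n)\<^sup>2" if n: "n \<ge> 1" for n
  proof -
    have "0 < A / real n" using AB n by simp
    then have "0 \<le> y n" using AB(3)[OF n] by linarith
    then have "(y n)\<^sup>2 \<le> (B / real n)\<^sup>2" using AB(3)[OF n] by (intro power_mono) auto
    then have "c2 * (y n)\<^sup>2 \<le> c2 * (B / real n)\<^sup>2" using c1 \<open>c1 \<le> c2\<close> by (intro mult_left_mono) auto
    then show ?thesis using rec[OF n] by (simp add: D_def power_divide)
  qed
  have "A / (3 * sqrt D) > 0" using AB(1) D by simp
  then have "box_dim_eq {x0 + y n |n. n \<ge> 1} (1/2) \<and> minkowski_nondegenerate {x0 + y n |n. n \<ge> 1}"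
    by (rule sqrt_content_dimension[OF _ harmonic_orbit_sqrt_content[OF AB(1) D mono AB(3) gap]])
  then show ?thesis using AB by blast
qed

lemma C_k_on_Suc_imp:
  assumes "C_k_on (Suc k) S F"
  shows "C_k_on k S F"
proof -
  have "((deriv ^^ k) F has_real_derivative (deriv ^^ Suc k) F x) (at x)" if "x \<in> S" for x
    using assms that unfolding C_k_on_def by blast
  then have "continuous_on S ((deriv ^^ k) F)"
    by (intro continuous_at_imp_continuous_on) (auto dest: DERIV_isCont)
  then show ?thesis using assms unfolding C_k_on_def by auto
qed

lemma taylor_at_neutral_fixed_point:
  fixes F :: "real \<Rightarrow> real"
  assumes r: "r > 0" and C: "C_k_on 2 {x0 - r<..<x0 + r} F"
    and F0: "F x0 = x0" and F1: "deriv F x0 = 1" and q: "deriv (deriv F) x0 \<noteq> 0"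
  shows "\<exists>\<delta>>0. \<forall>x. \<bar>x - x0\<bar> < \<delta> \<longrightarrow> (\<exists>t. \<bar>deriv (deriv F) t - deriv (deriv F) x0\<bar> < \<bar>deriv (deriv F) x0\<bar> / 2
           \<and> F x = x + deriv (deriv F) t / 2 * (x - x0)\<^sup>2)"
proof -
  let ?I = "{x0 - r<..<x0 + r}"
  have d2: "(deriv ^^ 2) F = deriv (deriv F)" by (simp add: numeral_2_eq_2)
  have D: "\<And>j x. j < 2 \<Longrightarrow> x \<in> ?I \<Longrightarrow> ((deriv ^^ j) F has_real_derivative (deriv ^^ Suc j) F x) (at x)"
    using C unfolding C_k_on_def by blast
  have "continuous_on ?I (deriv (deriv F))" using C d2 unfolding C_k_on_def by simp
  then have "isCont (deriv (deriv F)) x0" using r by (simp add: continuous_on_interior)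
  moreover have "\<bar>deriv (deriv F) x0\<bar> / 2 > 0" using q by simp
  ultimately obtain d where d: "d > 0"
    and close: "\<And>t. dist t x0 < d \<Longrightarrow> dist (deriv (deriv F) t) (deriv (deriv F) x0) < \<bar>deriv (deriv F) x0\<bar> / 2"
    unfolding continuous_at_eps_delta by blast
  show ?thesis
  proof (rule exI[of _ "min d r"], intro conjI allI impI)
    fix x assume x: "\<bar>x - x0\<bar> < min d r"
    obtain t where t: "\<bar>t - x0\<bar> \<le> \<bar>x - x0\<bar>"
      and Fx: "F x = (\<Sum>m<2. (deriv ^^ m) F x0 / fact m * (x - x0) ^ m) + (deriv ^^ 2) F t / fact 2 * (x - x0)\<^sup>2"
    proof (cases "x = x0")
      case True
      then show ?thesis using that[of x0] F0 by (simp add: lessThan_Suc)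
    next
      case False
      have "\<exists>t. (if x < x0 then x < t \<and> t < x0 else x0 < t \<and> t < x) \<and>
        F x = (\<Sum>m<2. (deriv ^^ m) F x0 / fact m * (x - x0) ^ m) + (deriv ^^ 2) F t / fact 2 * (x - x0)\<^sup>2"
        using x False by (intro Taylor[where a = "min x x0" and b = "max x x0"] allI impI D) auto
      then show ?thesis using that by (force split: if_splits)
    qed
    have "\<bar>deriv (deriv F) t - deriv (deriv F) x0\<bar> < \<bar>deriv (deriv F) x0\<bar> / 2"
      using close[of t] t x by (simp add: dist_real_def)
    moreover have "F x = x + deriv (deriv F) t / 2 * (x - x0)\<^sup>2"
      using Fx F0 F1 d2 by (simp add: numeral_2_eq_2 lessThan_Suc)
    ultimately show "\<exists>t. \<bar>deriv (deriv F) t - deriv (deriv F) x0\<bar> < \<bar>deriv (deriv F) x0\<bar> / 2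
           \<and> F x = x + deriv (deriv F) t / 2 * (x - x0)\<^sup>2" by blast
  qed (use d r in auto)
qed

(* On the side s where s F''(x0) < 0 the map moves points towards x0 by a quadratic
   amount: writing x = x0 + s h, the new displacement s (F x - x0) equals
   h - \<Theta>(h^2), with constants |F''(x0)|/4 and 3|F''(x0)|/4.  The radius is chosen so small
   that the step is at most a halving. *)
lemma parabolic_displacement:
  fixes F :: "real \<Rightarrow> real"
  assumes s: "\<bar>s\<bar> = 1" and r: "r > 0" and C: "C_k_on 2 {x0 - r<..<x0 + r} F"
    and F0: "F x0 = x0" and F1: "deriv F x0 = 1" and sg: "s * deriv (deriv F) x0 < 0"
  defines "a \<equiv> \<bar>deriv (deriv F) x0\<bar>"
  shows "\<exists>r1>0. 3 * a / 4 * r1 \<le> 1/2 \<and> (\<forall>h. 0 < h \<and> h < r1 \<longrightarrow>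
           a / 4 * h\<^sup>2 \<le> h - s * (F (x0 + s * h) - x0) \<and> h - s * (F (x0 + s * h) - x0) \<le> 3 * a / 4 * h\<^sup>2)"
proof -
  define q where "q = deriv (deriv F)"
  have "\<bar>s * q x0\<bar> = a" using s unfolding a_def q_def by (simp add: abs_mult)
  then have sq: "s * q x0 = - a" using sg unfolding q_def by linarith
  then have a: "a > 0" using sg q_def by simp
  obtain \<delta> where \<delta>: "\<delta> > 0" and T: "\<And>x. \<bar>x - x0\<bar> < \<delta> \<Longrightarrow>
      \<exists>t. \<bar>q t - q x0\<bar> < a / 2 \<and> F x = x + q t / 2 * (x - x0)\<^sup>2"
    using taylor_at_neutral_fixed_point[OF r C F0 F1] a unfolding q_def a_def by force
  define r1 where "r1 = min \<delta> (2 / (3 * a))"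
  have "3 * a / 4 * r1 \<le> 3 * a / 4 * (2 / (3 * a))" using a by (intro mult_left_mono) (auto simp: r1_def)
  also have "\<dots> = 1/2" using a by simp
  finally have small: "3 * a / 4 * r1 \<le> 1/2" .
  have "a / 4 * h\<^sup>2 \<le> h - s * (F (x0 + s * h) - x0) \<and> h - s * (F (x0 + s * h) - x0) \<le> 3 * a / 4 * h\<^sup>2"
    if h: "0 < h" "h < r1" for h
  proof -
    obtain t where t: "\<bar>q t - q x0\<bar> < a / 2"
      and Fx: "F (x0 + s * h) = x0 + s * h + q t / 2 * (s * h)\<^sup>2"
      using T[of "x0 + s * h"] h s by (auto simp: r1_def abs_mult)
    have "\<bar>s * q t - s * q x0\<bar> < a / 2" using t s by (simp add: abs_mult right_diff_distrib[symmetric])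
    then have st: "- 3 * a / 2 < s * q t" "s * q t < - a / 2" using sq by linarith+
    have ss: "s * s = 1" using abs_mult_self_eq[of s] s by simp
    then have "h - s * (F (x0 + s * h) - x0) = - (s * q t) / 2 * h\<^sup>2"
      using Fx by (simp add: algebra_simps power2_eq_square)
    moreover have "a / 4 * h\<^sup>2 \<le> - (s * q t) / 2 * h\<^sup>2" using st by (intro mult_right_mono) auto
    moreover have "- (s * q t) / 2 * h\<^sup>2 \<le> 3 * a / 4 * h\<^sup>2" using st by (intro mult_right_mono) auto
    ultimately show ?thesis by simp
  qed
  then show ?thesis using small \<delta> a by (intro exI[of _ r1]) (auto simp: r1_def)
qed

(* The model recursion y_(n+1) = G (y_n) for a map G with h - G h = \<Theta>(h^2) on (0, r1), where
   r1 is so small that one step at most halves h: every orbit starting in (0, r1) stays there,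
   so the quadratic decay result applies. *)
lemma normalised_orbit:
  fixes y :: "nat \<Rightarrow> real" and G :: "real \<Rightarrow> real"
  assumes a: "a > 0" and small: "3 * a / 4 * r1 \<le> 1/2"
    and disp: "\<And>h. 0 < h \<Longrightarrow> h < r1 \<Longrightarrow> a / 4 * h\<^sup>2 \<le> h - G h \<and> h - G h \<le> 3 * a / 4 * h\<^sup>2"
    and y1: "0 < y 1" "y 1 < r1" and orbit: "\<And>n. n \<ge> 1 \<Longrightarrow> y (Suc n) = G (y n)"
  shows "(\<forall>n\<ge>1. 0 < y n)
         \<and> (\<exists>A B. 0 < A \<and> A \<le> B \<and> (\<forall>n\<ge>1. A / real n \<le> y n \<and> y n \<le> B / real n))
         \<and> box_dim_eq {x0 + y n |n. n \<ge> 1} (1/2) \<and> minkowski_nondegenerate {x0 + y n |n. n \<ge> 1}"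
proof -
  have small_h: "3 * a / 4 * h \<le> 1/2" if "h \<le> r1" for h
    using mult_left_mono[OF that, of "3 * a / 4"] a small by linarith
  have inv: "0 < y n \<and> y n < r1" if "n \<ge> 1" for n
    using that
  proof (induction n rule: dec_induct)
    case base
    then show ?case using y1 by simp
  next
    case (step n)
    have st: "a / 4 * (y n)\<^sup>2 \<le> y n - y (Suc n)" "y n - y (Suc n) \<le> 3 * a / 4 * (y n)\<^sup>2"
      using disp[of "y n"] orbit[OF \<open>n \<ge> 1\<close>] step.IH by auto
    have "3 * a / 4 * (y n)\<^sup>2 \<le> 1/2 * y n"
      using small_h[of "y n"] step.IH by (simp add: power2_eq_square mult_right_mono)
    moreover have "0 \<le> a / 4 * (y n)\<^sup>2" using a by simp
    ultimately show ?case using st step.IH by linarith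
  qed
  have rec: "a / 4 * (y n)\<^sup>2 \<le> y n - y (Suc n) \<and> y n - y (Suc n) \<le> 3 * a / 4 * (y n)\<^sup>2"
    if "n \<ge> 1" for n
    using disp[of "y n"] orbit[OF that] inv[OF that] by simp
  have small_y: "3 * a / 4 * y n \<le> 1/2" if "n \<ge> 1" for n
    using small_h[of "y n"] inv[OF that] by simp
  have "a / 4 > 0" using a by simp
  from quadratic_decay_orbit[of "a / 4" y "3 * a / 4" x0, OF this y1(1) rec small_y]
  show ?thesis using inv by blast
qed

lemma one_sided_orbit:
  fixes F :: "real \<Rightarrow> real"
  assumes s: "\<bar>s\<bar> = 1" and r: "r > 0" and C: "C_k_on 2 {x0 - r<..<x0 + r} F"
    and F0: "F x0 = x0" and F1: "deriv F x0 = 1" and sg: "s * deriv (deriv F) x0 < 0"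
  shows "\<exists>r1>0. \<forall>x1\<in>{x1. 0 < s * (x1 - x0) \<and> s * (x1 - x0) < r1}. \<forall>x :: nat \<Rightarrow> real.
           x 1 = x1 \<and> (\<forall>n\<ge>1. x (Suc n) = F (x n)) \<longrightarrow>
           comparable_seq (\<lambda>n. \<bar>x n - x0\<bar>) (\<lambda>n. 1 / real n)
           \<and> box_dim_eq {x n | n. n \<ge> 1} (1/2) \<and> minkowski_nondegenerate {x n | n. n \<ge> 1}"
proof -
  define a where "a = \<bar>deriv (deriv F) x0\<bar>"
  have a: "a > 0" using sg by (auto simp: a_def)
  obtain r1 where r1: "r1 > 0" and small: "3 * a / 4 * r1 \<le> 1/2"
    and disp: "\<And>h. 0 < h \<Longrightarrow> h < r1 \<Longrightarrow> a / 4 * h\<^sup>2 \<le> h - s * (F (x0 + s * h) - x0)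
                                          \<and> h - s * (F (x0 + s * h) - x0) \<le> 3 * a / 4 * h\<^sup>2"
    using parabolic_displacement[OF s r C F0 F1 sg] unfolding a_def by blast
  have ss: "s * s = 1" using abs_mult_self_eq[of s] s by simp
  show ?thesis
  proof (rule exI[of _ r1], intro conjI[OF r1] ballI allI impI, elim conjE)
    fix x1 and x :: "nat \<Rightarrow> real"
    assume start: "x1 \<in> {x1. 0 < s * (x1 - x0) \<and> s * (x1 - x0) < r1}" "x 1 = x1"
      and orbit: "\<forall>n\<ge>1. x (Suc n) = F (x n)"
    define y where "y n = s * (x n - x0)" for n
    have y1: "0 < y 1" "y 1 < r1" using start by (auto simp: y_def)
    have x_eq: "x n = x0 + s * y n" for n
      using ss by (simp add: y_def mult.assoc[symmetric])
    have y_orbit: "y (Suc n) = s * (F (x0 + s * y n) - x0)" if "n \<ge> 1" for n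
      unfolding y_def[of "Suc n"] using orbit that x_eq[of n] by simp
    obtain pos: "\<forall>n\<ge>1. 0 < y n"
      and bounds: "\<exists>A B. 0 < A \<and> A \<le> B \<and> (\<forall>n\<ge>1. A / real n \<le> y n \<and> y n \<le> B / real n)"
      and dim: "box_dim_eq {x0 + y n |n. n \<ge> 1} (1/2)" "minkowski_nondegenerate {x0 + y n |n. n \<ge> 1}"
      using normalised_orbit[OF a small disp y1 y_orbit, of x0] by blast
    have "\<bar>x n - x0\<bar> = y n" if "n \<ge> 1" for n
      using pos[rule_format, OF that] x_eq[of n] s by (simp add: abs_mult)
    then have comparable: "comparable_seq (\<lambda>n. \<bar>x n - x0\<bar>) (\<lambda>n. 1 / real n)"
      using bounds by (auto intro: comparable_seq_reciprocal)
    have orbit_set: "{x n | n. n \<ge> 1} = (\<lambda>t. x0 + s * (t - x0)) ` {x0 + y n |n. n \<ge> 1}"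
    proof (intro set_eqI iffI)
      fix z assume "z \<in> {x n | n. n \<ge> 1}"
      then obtain n where "n \<ge> 1" "z = x n" by blast
      then show "z \<in> (\<lambda>t. x0 + s * (t - x0)) ` {x0 + y n |n. n \<ge> 1}"
        using x_eq by (intro image_eqI[of _ _ "x0 + y n"]) auto
    qed (auto simp: x_eq)
    have "box_dim_eq ((\<lambda>t. x0 + s * (t - x0)) ` {x0 + y n |n. n \<ge> 1}) (1/2)
             \<and> minkowski_nondegenerate ((\<lambda>t. x0 + s * (t - x0)) ` {x0 + y n |n. n \<ge> 1})"
      using s dim by (rule unit_scaling_dimension)
    then show "comparable_seq (\<lambda>n. \<bar>x n - x0\<bar>) (\<lambda>n. 1 / real n)
           \<and> box_dim_eq {x n | n. n \<ge> 1} (1/2) \<and> minkowski_nondegenerate {x n | n. n \<ge> 1}"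
      using comparable orbit_set by simp
  qed
qed

theorem theorem3:
  fixes F :: "real \<Rightarrow> real" and x0 r :: real
  assumes "r > 0"
    and "C_k_on 3 {x0 - r<..<x0 + r} F"
    and "F x0 = x0"
    and "deriv F x0 = 1"
  shows "(deriv (deriv F) x0 < 0 \<longrightarrow>
           (\<exists>r1>0. \<forall>x1\<in>{x0<..<x0 + r1}. \<forall>x :: nat \<Rightarrow> real.
              x 1 = x1 \<and> (\<forall>n\<ge>1. x (Suc n) = F (x n)) \<longrightarrow>
              comparable_seq (\<lambda>n. \<bar>x n - x0\<bar>) (\<lambda>n. 1 / real n)
              \<and> box_dim_eq {x n | n. n \<ge> 1} (1/2)
              \<and> minkowski_nondegenerate {x n | n. n \<ge> 1}))
       \<and> (deriv (deriv F) x0 > 0 \<longrightarrow>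
           (\<exists>r1>0. \<forall>x1\<in>{x0 - r1<..<x0}. \<forall>x :: nat \<Rightarrow> real.
              x 1 = x1 \<and> (\<forall>n\<ge>1. x (Suc n) = F (x n)) \<longrightarrow>
              comparable_seq (\<lambda>n. \<bar>x n - x0\<bar>) (\<lambda>n. 1 / real n)
              \<and> box_dim_eq {x n | n. n \<ge> 1} (1/2)
              \<and> minkowski_nondegenerate {x n | n. n \<ge> 1}))"
proof -
  have C2: "C_k_on 2 {x0 - r<..<x0 + r} F"
    using C_k_on_Suc_imp[of 2] assms(2) by (simp add: numeral_3_eq_3 numeral_2_eq_2)
  have right: "{x1. 0 < x1 - x0 \<and> x1 - x0 < r1} = {x0<..<x0 + r1}"
    and left: "{x1. 0 < - (x1 - x0) \<and> - (x1 - x0) < r1} = {x0 - r1<..<x0}" for r1 :: real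
    by auto
  show ?thesis
    using one_sided_orbit[OF abs_one assms(1) C2 assms(3,4), unfolded mult_1 right]
      one_sided_orbit[OF abs_neg_one assms(1) C2 assms(3,4),
        unfolded mult_minus1 neg_less_0_iff_less left]
    by blast
qed

end
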